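(* Let $n\ge2$, let $A\subseteq\mathfrak{S}_n$ be Schur-positive and $\mathrm{cDes}$-invariant, and let $(m_\lambda)_{\lambda\vdash n}$ be nonnegative integers such that $\sum_{\pi\in A}\mathbf{x}^{\mathrm{Des}(\pi)}=\sum_{\lambda\vdash n}m_\lambda\sum_{T\in\mathrm{SYT}(\lambda)}\mathbf{x}^{\mathrm{Des}(T)}$. Then for every $0\le k<n$ the alternating sum $\sum_{i=k}^{n-1}(-1)^{k-i}m_{(n-i,1^i)}$ is nonnegative, and it equals $0$ when $k=0$.
   Context: For $\pi\in\mathfrak{S}_n$ (one-line notation), $\mathrm{Des}(\pi)=\{i\in[n-1]:\pi(i)>\pi(i+1)\}$ and $\mathrm{cDes}(\pi)=\{i\in[n]:\pi(i)>\pi(i+1)\}$ with $\pi(n+1):=\pi(1)$. $\mathbf{x}^J=\prod_{i\in J}x_i$; $i+J=\{i+j\bmod n:j\in J\}\subseteq[n]$. $A$ is Schur-positive if $\sum_{\pi\in A}\mathcal{F}_{n,\mathrm{Des}(\pi)}$ is symmetric and Schur-nonnegative, where $\mathcal{F}_{n,D}=\sum x_{i_1}\cdots x_{i_n}$ over $i_1\le\cdots\le i_n$ with $i_j<i_{j+1}$ for $j\in D$. $A$ is $\mathrm{cDes}$-invariant if there is a bijection $\psi:A\to A$ with $\mathrm{cDes}(\psi\pi)=1+\mathrm{cDes}(\pi)$. For $T\in\mathrm{SYT}(\lambda)$, $\mathrm{Des}(T)$ is the set of $i\in[n-1]$ with $i+1$ in a strictly lower row than $i$; $(n-i,1^i)$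 denotes a hook partition. *)

theory Defs
  imports "HOL-Combinatorics.Permutations"
begin

(* Permutations of [n] = {1..n} are functions nat => nat that permute {1..n}. *)

definition Des :: "nat \<Rightarrow> (nat \<Rightarrow> nat) \<Rightarrow> nat set" where
  "Des n \<pi> = {i \<in> {1..n-1}. \<pi> i > \<pi> (i+1)}"

definition cDes :: "nat \<Rightarrow> (nat \<Rightarrow> nat) \<Rightarrow> nat set" where
  "cDes n \<pi> = {i \<in> {1..n}. \<pi> i > \<pi> (if i = n then 1 else i+1)}"

(* i + J = {i + j mod n : j in J}, residues taken in [n] = {1..n} *)
definition cshift :: "nat \<Rightarrow> nat \<Rightarrow> nat set \<Rightarrow> nat set" where
  "cshift n i J = (\<lambda>j. ((i + j + n - 1) mod n) + 1) ` J"

definition cDes_invariant :: "nat \<Rightarrow> (nat \<Rightarrow> nat) set \<Rightarrow> bool" where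
  "cDes_invariant n A \<longleftrightarrow>
     (\<exists>\<psi>. bij_betw \<psi> A A \<and> (\<forall>\<pi>\<in>A. cDes n (\<psi> \<pi>) = cshift n 1 (cDes n \<pi>)))"

definition partitions :: "nat \<Rightarrow> nat list set" where
  "partitions n = {la. sorted (rev la) \<and> (\<forall>x\<in>set la. 0 < x) \<and> sum_list la = n}"

definition hook :: "nat \<Rightarrow> nat \<Rightarrow> nat list" where
  "hook n i = (n - i) # replicate i 1"

(* cells of the Young diagram, English convention, (row, column), 0-indexed *)
definition cells :: "nat list \<Rightarrow> (nat \<times> nat) set" where
  "cells la = {(r, c). r < length la \<and> c < la ! r}"

definition SYT :: "nat list \<Rightarrow> (nat \<times> nat \<Rightarrow> nat) set" where
  "SYT la = {T. bij_betw T (cells la) {1..sum_list la}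
        \<and> (\<forall>p. p \<notin> cells la \<longrightarrow> T p = 0)
        \<and> (\<forall>r c. (r, c+1) \<in> cells la \<longrightarrow> T (r, c) < T (r, c+1))
        \<and> (\<forall>r c. (r+1, c) \<in> cells la \<longrightarrow> T (r, c) < T (r+1, c))}"

definition DesT :: "nat list \<Rightarrow> (nat \<times> nat \<Rightarrow> nat) \<Rightarrow> nat set" where
  "DesT la T = {i \<in> {1..sum_list la - 1}. \<exists>p\<in>cells la. \<exists>q\<in>cells la.
       T p = i \<and> T q = i + 1 \<and> fst p < fst q}"

definition SSYT :: "nat list \<Rightarrow> (nat \<times> nat \<Rightarrow> nat) set" where
  "SSYT la = {T. (\<forall>p\<in>cells la. 1 \<le> T p)
        \<and> (\<forall>p. p \<notin> cells la \<longrightarrow> T p = 0)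
        \<and> (\<forall>r c. (r, c+1) \<in> cells la \<longrightarrow> T (r, c) \<le> T (r, c+1))
        \<and> (\<forall>r c. (r+1, c) \<in> cells la \<longrightarrow> T (r, c) < T (r+1, c))}"

(* Formal power series in variables x_1, x_2, ... are represented by their coefficient
   functions: a monomial is an exponent vector \<alpha> :: nat \<Rightarrow> nat (\<alpha> v = exponent of x_v). *)

definition schur_coeff :: "nat list \<Rightarrow> (nat \<Rightarrow> nat) \<Rightarrow> nat" where
  "schur_coeff la \<alpha> = card {T \<in> SSYT la. \<forall>v. card {p \<in> cells la. T p = v} = \<alpha> v}"

(* coefficient of x^\<alpha> in Gessel's fundamental quasisymmetric function F_{n,D} *)
definition F_coeff :: "nat \<Rightarrow> nat set \<Rightarrow> (nat \<Rightarrow> nat) \<Rightarrow> nat" where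
  "F_coeff n D \<alpha> = card {s :: nat \<Rightarrow> nat.
        (\<forall>j. j \<notin> {1..n} \<longrightarrow> s j = 0) \<and> (\<forall>j\<in>{1..n}. 1 \<le> s j)
      \<and> (\<forall>j\<in>{1..n-1}. s j \<le> s (j+1)) \<and> (\<forall>j\<in>D. j \<in> {1..n-1} \<longrightarrow> s j < s (j+1))
      \<and> (\<forall>v. card {j\<in>{1..n}. s j = v} = \<alpha> v)}"

definition QA_coeff :: "nat \<Rightarrow> (nat \<Rightarrow> nat) set \<Rightarrow> (nat \<Rightarrow> nat) \<Rightarrow> nat" where
  "QA_coeff n A \<alpha> = (\<Sum>\<pi>\<in>A. F_coeff n (Des n \<pi>) \<alpha>)"

definition symmetric_fun :: "((nat \<Rightarrow> nat) \<Rightarrow> nat) \<Rightarrow> bool" where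
  "symmetric_fun f \<longleftrightarrow> (\<forall>\<sigma> \<alpha>. \<sigma> permutes {1..} \<longrightarrow> f (\<alpha> \<circ> \<sigma>) = f \<alpha>)"

definition schur_nonneg :: "nat \<Rightarrow> ((nat \<Rightarrow> nat) \<Rightarrow> nat) \<Rightarrow> bool" where
  "schur_nonneg n f \<longleftrightarrow>
     (\<exists>c :: nat list \<Rightarrow> nat. \<forall>\<alpha>. f \<alpha> = (\<Sum>la\<in>partitions n. c la * schur_coeff la \<alpha>))"

definition schur_positive :: "nat \<Rightarrow> (nat \<Rightarrow> nat) set \<Rightarrow> bool" where
  "schur_positive n A \<longleftrightarrow> symmetric_fun (QA_coeff n A) \<and> schur_nonneg n (QA_coeff n A)"

end

theory Submission
  imports Defs
begin

(* Let f j be the number of \<pi> \<in> A with cDes \<pi> = {1..j}. A permutation has Des \<pi> = {1..i} iff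
   cDes \<pi> is {1..i} or {1..i} \<union> {n}, and the cDes-invariance bijection matches the latter
   class with cDes \<pi> = {1..i+1}. On the tableau side, the only SYT with descent set {1..i} is the
   one of hook shape (n-i, 1^i) with 1, ..., i+1 down its first column. Hence
   m (hook n i) = f i + f (i+1), and the alternating sum starting at k telescopes to f k \<ge> 0:
   f n = 0 because the minimum of \<pi> is never a cyclic descent, and f 0 = 0 because the maximum
   always is. *)

lemma cells_downward_closed:
  assumes "sorted (rev la)" "(r', c') \<in> cells la" "r \<le> r'" "c \<le> c'"
  shows "(r, c) \<in> cells la"
proof -
  have "la ! r' \<le> la ! r"
    using sorted_rev_nth_mono[OF assms(1) assms(3)] assms(2) by (auto simp: cells_def)
  then show ?thesis using assms by (auto simp: cells_def)
qed

lemma SYT_bij: "T \<in> SYT la \<Longrightarrow> bij_betw T (cells la) {1..sum_list la}"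
  by (simp add: SYT_def)

lemma SYT_outside_cells: "T \<in> SYT la \<Longrightarrow> p \<notin> cells la \<Longrightarrow> T p = 0"
  unfolding SYT_def by blast

lemma SYT_range: "T \<in> SYT la \<Longrightarrow> p \<in> cells la \<Longrightarrow> T p \<in> {1..sum_list la}"
  using SYT_bij bij_betwE by blast

lemma SYT_inj:
  assumes "T \<in> SYT la" "p \<in> cells la" "q \<in> cells la" "T p = T q"
  shows "p = q"
  using SYT_bij[OF assms(1)] assms(2-4) by (metis bij_betw_def inj_onD)

lemma SYT_surj:
  assumes "T \<in> SYT la" "j \<in> {1..sum_list la}"
  obtains p where "p \<in> cells la" "T p = j"
  using SYT_bij[OF assms(1)] assms(2) by (metis bij_betw_imp_surj_on imageE)

lemma SYT_row_chain:
  assumes "T \<in> SYT la" "(r, c + d) \<in> cells la"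
  shows "T (r, c) + d \<le> T (r, c + d)"
  using assms(2)
proof (induction d)
  case (Suc d)
  then have "(r, c + d) \<in> cells la" by (auto simp: cells_def)
  moreover have "T (r, c + d) < T (r, c + d + 1)" using assms(1) Suc.prems by (auto simp: SYT_def)
  ultimately show ?case using Suc.IH by simp
qed simp

lemma SYT_column_chain:
  assumes "T \<in> SYT la" "sorted (rev la)" "(r + d, c) \<in> cells la"
  shows "T (r, c) + d \<le> T (r + d, c)"
  using assms(3)
proof (induction d)
  case (Suc d)
  then have "(r + d, c) \<in> cells la" using cells_downward_closed[OF assms(2)] by simp
  moreover have "T (r + d, c) < T (r + d + 1, c)" using assms(1) Suc.prems by (auto simp: SYT_def)
  ultimately show ?case using Suc.IH by simp
qed simp

lemma SYT_entry_distance: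
  assumes "T \<in> SYT la" "sorted (rev la)" "(r', c') \<in> cells la" "r \<le> r'" "c \<le> c'"
  shows "T (r, c) + (r' - r) + (c' - c) \<le> T (r', c')"
proof -
  have "(r, c') \<in> cells la" using cells_downward_closed[OF assms(2,3)] assms(4) by simp
  then have "T (r, c) + (c' - c) \<le> T (r, c')"
    using SYT_row_chain[OF assms(1), of r c "c' - c"] assms(5) by simp
  also have "T (r, c') + (r' - r) \<le> T (r', c')"
    using SYT_column_chain[OF assms(1,2), of r "r' - r" c'] assms(3,4) by simp
  finally show ?thesis by simp
qed

lemma SYT_entry_lower_bound:
  assumes "T \<in> SYT la" "sorted (rev la)" "(r, c) \<in> cells la"
  shows "r + c + 1 \<le> T (r, c)"
proof -
  have "(0, 0) \<in> cells la" using cells_downward_closed[OF assms(2,3)] by simp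
  then have "1 \<le> T (0, 0)" using SYT_range[OF assms(1)] by simp
  then show ?thesis using SYT_entry_distance[OF assms, of 0 0] by simp
qed

lemma DesT_iff_row_less:
  assumes "T \<in> SYT la" "p \<in> cells la" "q \<in> cells la" "T p = j" "T q = Suc j"
  shows "j \<in> DesT la T \<longleftrightarrow> fst p < fst q"
proof
  assume "j \<in> DesT la T"
  then obtain p' q' where "p' \<in> cells la" "q' \<in> cells la" "T p' = j" "T q' = Suc j" "fst p' < fst q'"
    unfolding DesT_def by auto
  then show "fst p < fst q" using SYT_inj[OF assms(1)] assms by metis
next
  assume "fst p < fst q"
  moreover have "j \<in> {1..sum_list la - 1}"
    using SYT_range[OF assms(1) assms(2)] SYT_range[OF assms(1) assms(3)] assms(4,5) by auto
  ultimately show "j \<in> DesT la T" unfolding DesT_def using assms by auto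
qed

lemma SYT_initial_descents_first_column:
  assumes T: "T \<in> SYT la" and srt: "sorted (rev la)" and D: "DesT la T = {1..i}"
    and i: "i < sum_list la" and "r \<le> i"
  shows "(r, 0) \<in> cells la \<and> T (r, 0) = Suc r"
  using \<open>r \<le> i\<close>
proof (induction r)
  case 0
  obtain p where p: "p \<in> cells la" "T p = 1" using SYT_surj[OF T, of 1] i by auto
  then have "p = (0, 0)"
    using SYT_entry_lower_bound[OF T srt, of "fst p" "snd p"] by (simp add: prod_eq_iff)
  then show ?case using p by simp
next
  case (Suc r)
  then have r: "(r, 0) \<in> cells la" "T (r, 0) = Suc r" by simp_all
  obtain q where q: "q \<in> cells la" "T q = Suc (Suc r)"
    using SYT_surj[OF T, of "Suc (Suc r)"] Suc.prems i by auto
  have "Suc r \<in> DesT la T" using D Suc.prems by simp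
  then have "r < fst q" using DesT_iff_row_less[OF T r(1) q(1) r(2) q(2)] by simp
  moreover have "fst q + snd q + 1 \<le> Suc (Suc r)"
    using SYT_entry_lower_bound[OF T srt, of "fst q" "snd q"] q by simp
  ultimately have "q = (Suc r, 0)" by (cases q) auto
  then show ?case using q by simp
qed

lemma SYT_initial_descents_entry_le:
  assumes T: "T \<in> SYT la" and srt: "sorted (rev la)" and D: "DesT la T = {1..i}"
    and "p \<in> cells la" "Suc i \<le> T p"
  shows "T p \<le> snd p + Suc i"
proof -
  \<comment> \<open>Beyond i there are no descents: each next entry lies weakly higher, hence strictly right.\<close>
  have "\<forall>p\<in>cells la. T p = j \<longrightarrow> j \<le> snd p + Suc i" if "Suc i \<le> j" for j
    using that
  proof (induction j rule: dec_induct)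
    case (step j)
    show ?case
    proof (intro ballI impI)
      fix q assume q: "q \<in> cells la" "T q = Suc j"
      obtain p where p: "p \<in> cells la" "T p = j"
        using SYT_surj[OF T, of j] SYT_range[OF T q(1)] q(2) step.hyps by auto
      have "j \<notin> DesT la T" using D step.hyps by simp
      then have "fst q \<le> fst p" using DesT_iff_row_less[OF T p(1) q(1) p(2) q(2)] by simp
      moreover have "\<not> snd q \<le> snd p"
      proof
        assume "snd q \<le> snd p"
        with \<open>fst q \<le> fst p\<close> have "T q \<le> T p"
          using SYT_entry_distance[OF T srt, of "fst p" "snd p" "fst q" "snd q"] p(1) by simp
        then show False using p(2) q(2) by simp
      qed
      ultimately show "Suc j \<le> snd q + Suc i" using step.IH p by fastforce
    qed
  qed simp
  then show ?thesis using assms(4,5) by blast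
qed

lemma length_le_sum_list: "\<forall>x\<in>set xs. 1 \<le> x \<Longrightarrow> length xs \<le> sum_list (xs :: nat list)"
  by (induction xs) auto

lemma replicate_one_if_sum_list_eq_length:
  "\<forall>x\<in>set xs. 1 \<le> x \<Longrightarrow> sum_list xs = length xs \<Longrightarrow> xs = replicate (length xs) (1 :: nat)"
proof (induction xs)
  case (Cons a xs)
  then have "a = 1" "sum_list xs = length xs" using length_le_sum_list[of xs] by auto
  then show ?case using Cons by simp
qed simp

lemma SYT_initial_descents_shape:
  assumes la: "la \<in> partitions n" and T: "T \<in> SYT la" and D: "DesT la T = {1..i}" and "i < n"
  shows "la = hook n i"
proof -
  have srt: "sorted (rev la)" and pos: "\<forall>x\<in>set la. 1 \<le> x" and sl: "sum_list la = n"
    using la by (auto simp: partitions_def Suc_le_eq)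
  have "(i, 0) \<in> cells la" using SYT_initial_descents_first_column[OF T srt D] \<open>i < n\<close> sl by simp
  then obtain a rest where la_eq: "la = a # rest" and len: "i \<le> length rest"
    by (cases la) (auto simp: cells_def)
  obtain p where p: "p \<in> cells la" "T p = n" using SYT_surj[OF T, of n] sl \<open>i < n\<close> by auto
  then have "n \<le> snd p + Suc i" using SYT_initial_descents_entry_le[OF T srt D p(1)] \<open>i < n\<close> by simp
  moreover have "snd p < la ! fst p" using p(1) by (auto simp: cells_def)
  moreover have "la ! fst p \<le> la ! 0" using sorted_rev_nth_mono[OF srt, of 0 "fst p"] p(1)
    by (auto simp: cells_def)
  ultimately have "n - i \<le> a" using la_eq by simp
  moreover have "length rest \<le> sum_list rest" using length_le_sum_list pos la_eq by simp
  moreover have "a + sum_list rest = n" using sl la_eq by simp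
  ultimately have "a = n - i" "length rest = i" "sum_list rest = length rest"
    using len \<open>i < n\<close> by linarith+
  then show ?thesis
    using replicate_one_if_sum_list_eq_length[of rest] pos la_eq by (simp add: hook_def)
qed

lemma hook_partition: "i < n \<Longrightarrow> hook n i \<in> partitions n"
  by (auto simp: partitions_def hook_def sorted_append sum_list_replicate)

lemma sum_list_hook: "i < n \<Longrightarrow> sum_list (hook n i) = n"
  by (simp add: hook_def sum_list_replicate)

lemma cells_hook: "i < n \<Longrightarrow> cells (hook n i) = {0} \<times> {..<n - i} \<union> {1..i} \<times> {0}"
  by (auto simp: cells_def hook_def nth_Cons split: nat.splits)

definition hook_tableau :: "nat \<Rightarrow> nat \<Rightarrow> nat \<times> nat \<Rightarrow> nat" where
  "hook_tableau n i p =
     (if p \<in> cells (hook n i) then if snd p = 0 then Suc (fst p) else snd p + Suc i else 0)"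

lemma hook_tableau_SYT:
  assumes "i < n"
  shows "hook_tableau n i \<in> SYT (hook n i)"
proof -
  have "bij_betw (hook_tableau n i) (cells (hook n i)) {1..n}"
  proof (rule bij_betwI')
    fix v assume "v \<in> {1..n}"
    show "\<exists>p\<in>cells (hook n i). v = hook_tableau n i p"
    proof (cases "v \<le> Suc i")
      case True
      then show ?thesis using \<open>v \<in> {1..n}\<close> assms
        by (intro bexI[of _ "(v - 1, 0)"]) (auto simp: cells_hook hook_tableau_def)
    next
      case False
      then show ?thesis using \<open>v \<in> {1..n}\<close> assms
        by (intro bexI[of _ "(0, v - Suc i)"]) (auto simp: cells_hook hook_tableau_def)
    qed
  qed (use assms in \<open>auto simp: cells_hook hook_tableau_def\<close>)
  then show ?thesis
    using assms by (auto simp: SYT_def sum_list_hook hook_tableau_def cells_hook)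
qed

lemma DesT_hook_tableau:
  assumes "i < n"
  shows "DesT (hook n i) (hook_tableau n i) = {1..i}"
proof (intro equalityI subsetI)
  fix j assume "j \<in> DesT (hook n i) (hook_tableau n i)"
  then obtain p q where "p \<in> cells (hook n i)" "q \<in> cells (hook n i)" "fst p < fst q"
      "hook_tableau n i q = Suc j"
    unfolding DesT_def by auto
  then show "j \<in> {1..i}" using assms by (auto simp: cells_hook hook_tableau_def)
next
  fix j assume "j \<in> {1..i}"
  then have "(j - 1, 0) \<in> cells (hook n i)" "(j, 0) \<in> cells (hook n i)"
    "hook_tableau n i (j - 1, 0) = j" "hook_tableau n i (j, 0) = Suc j"
    using assms by (auto simp: cells_hook hook_tableau_def)
  then show "j \<in> DesT (hook n i) (hook_tableau n i)"
    using DesT_iff_row_less[OF hook_tableau_SYT[OF assms]] \<open>j \<in> {1..i}\<close> by fastforce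
qed

lemma hook_SYT_initial_descents_unique:
  assumes "i < n" and T: "T \<in> SYT (hook n i)" and D: "DesT (hook n i) T = {1..i}"
  shows "T = hook_tableau n i"
proof
  fix p
  have srt: "sorted (rev (hook n i))" using hook_partition[OF assms(1)] by (simp add: partitions_def)
  note first_column = SYT_initial_descents_first_column[OF T srt D, unfolded sum_list_hook[OF assms(1)]]
  consider "p \<notin> cells (hook n i)" | r where "r \<le> i" "p = (r, 0)"
    | c where "0 < c" "c < n - i" "p = (0, c)"
    using assms(1) by (cases p) (force simp: cells_hook)
  then show "T p = hook_tableau n i p"
  proof cases
    case 1
    then show ?thesis using SYT_outside_cells[OF T] by (simp add: hook_tableau_def)
  next
    case 2
    then show ?thesis using first_column assms(1) by (simp add: hook_tableau_def)
  next
    case 3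
    have cells: "(0, 1) \<in> cells (hook n i)" "(0, c) \<in> cells (hook n i)"
      using 3 assms(1) by (auto simp: cells_hook)
    have "\<not> T (0, 1) \<le> Suc i"
    proof
      assume "T (0, 1) \<le> Suc i"
      moreover have "1 \<le> T (0, 1)" using SYT_range[OF T cells(1)] by simp
      ultimately have "T (0, 1) = T (T (0, 1) - 1, 0)" "(T (0, 1) - 1, 0) \<in> cells (hook n i)"
        using first_column[of "T (0, 1) - 1"] assms(1) by auto
      then show False using SYT_inj[OF T cells(1)] by fastforce
    qed
    moreover have "T (0, 1) + (c - 1) \<le> T (0, c)"
      using SYT_row_chain[OF T, of 0 1 "c - 1"] cells 3 by simp
    ultimately have "c + Suc i \<le> T (0, c)" using 3 by linarith
    moreover have "T (0, c) \<le> c + Suc i"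
      using SYT_initial_descents_entry_le[OF T srt D cells(2)] \<open>c + Suc i \<le> T (0, c)\<close> by simp
    ultimately show ?thesis using 3 cells by (simp add: hook_tableau_def)
  qed
qed

lemma card_SYT_initial_descents:
  assumes "la \<in> partitions n" "i < n"
  shows "card {T \<in> SYT la. DesT la T = {1..i}} = (if la = hook n i then 1 else 0)"
proof (cases "la = hook n i")
  case True
  then have "{T \<in> SYT la. DesT la T = {1..i}} = {hook_tableau n i}"
    using hook_SYT_initial_descents_unique[OF assms(2)]
      hook_tableau_SYT[OF assms(2)] DesT_hook_tableau[OF assms(2)] by blast
  then show ?thesis using True by simp
next
  case False
  then have "{T \<in> SYT la. DesT la T = {1..i}} = {}"
    using SYT_initial_descents_shape[OF assms(1) _ _ assms(2)] by blast
  then show ?thesis using False by (simp only: card.empty if_False)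
qed

lemma finite_partitions: "finite (partitions n)"
proof (rule finite_subset)
  show "partitions n \<subseteq> {xs. set xs \<subseteq> {0..n} \<and> length xs \<le> n}"
  proof
    fix xs assume "xs \<in> partitions n"
    then have "\<forall>x\<in>set xs. 1 \<le> x" "sum_list xs = n" by (auto simp: partitions_def Suc_le_eq)
    then show "xs \<in> {xs. set xs \<subseteq> {0..n} \<and> length xs \<le> n}"
      using member_le_sum_list[of _ xs] length_le_sum_list[of xs] by auto
  qed
qed (rule finite_lists_length_le[OF finite_atLeastAtMost])

lemma sum_card_SYT_initial_descents:
  assumes "i < n"
  shows "(\<Sum>la\<in>partitions n. m la * card {T \<in> SYT la. DesT la T = {1..i}}) = m (hook n i)"
proof -
  have "(\<Sum>la\<in>partitions n. m la * card {T \<in> SYT la. DesT la T = {1..i}})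
      = (\<Sum>la\<in>partitions n. if la = hook n i then m la else 0)"
    using card_SYT_initial_descents[OF _ assms] by (intro sum.cong) auto
  also have "\<dots> = m (hook n i)"
    using finite_partitions hook_partition[OF assms] by simp
  finally show ?thesis .
qed

lemma Des_eq_cDes_minus: "Des n \<pi> = cDes n \<pi> - {n}"
  by (auto simp: Des_def cDes_def)

lemma cDes_subset: "cDes n \<pi> \<subseteq> {1..n}"
  by (auto simp: cDes_def)

lemma Des_eq_iff_cDes:
  assumes "J \<subseteq> {1..n - 1}"
  shows "Des n \<pi> = J \<longleftrightarrow> cDes n \<pi> = J \<or> cDes n \<pi> = insert n J"
proof -
  have "n \<notin> {1..n - 1}" by auto
  then have "n \<notin> J" using assms by blast
  then show ?thesis unfolding Des_eq_cDes_minus by blast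
qed

lemma card_Des_eq:
  assumes "finite A" "J \<subseteq> {1..n - 1}"
  shows "card {\<pi> \<in> A. Des n \<pi> = J}
       = card {\<pi> \<in> A. cDes n \<pi> = J} + card {\<pi> \<in> A. cDes n \<pi> = insert n J}"
proof -
  have "{\<pi> \<in> A. Des n \<pi> = J} = {\<pi> \<in> A. cDes n \<pi> = J} \<union> {\<pi> \<in> A. cDes n \<pi> = insert n J}"
    using Des_eq_iff_cDes[OF assms(2)] by blast
  moreover have "n \<notin> {1..n - 1}" by auto
  then have "insert n J \<noteq> J" using assms(2) by blast
  ultimately show ?thesis by (simp add: card_Un_disjoint assms(1) disjoint_iff)
qed

lemma cDes_nonempty:
  assumes "inj_on \<pi> {1..n}" "2 \<le> n"
  shows "cDes n \<pi> \<noteq> {}"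
proof -
  have "Max (\<pi> ` {1..n}) \<in> \<pi> ` {1..n}" using assms(2) by (intro Max_in) auto
  then obtain j where j: "j \<in> {1..n}" "\<pi> j = Max (\<pi> ` {1..n})" by auto
  define j' where "j' = (if j = n then 1 else j + 1)"
  have j': "j' \<in> {1..n}" "j' \<noteq> j" using j assms(2) by (auto simp: j'_def)
  then have "\<pi> j' \<le> \<pi> j" unfolding j(2) by (intro Max_ge) auto
  moreover have "\<pi> j' \<noteq> \<pi> j" using inj_onD[OF assms(1)] j(1) j' by blast
  ultimately have "j \<in> cDes n \<pi>" using j(1) unfolding cDes_def j'_def by simp
  then show ?thesis by blast
qed

lemma cDes_neq_atLeastAtMost:
  assumes "1 \<le> n"
  shows "cDes n \<pi> \<noteq> {1..n}"
proof -
  have "Min (\<pi> ` {1..n}) \<in> \<pi> ` {1..n}" using assms by (intro Min_in) auto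
  then obtain j where j: "j \<in> {1..n}" "\<pi> j = Min (\<pi> ` {1..n})" by auto
  define j' where "j' = (if j = n then 1 else j + 1)"
  have "j' \<in> {1..n}" using j assms by (auto simp: j'_def)
  then have "\<pi> j \<le> \<pi> j'" unfolding j(2) by (intro Min_le) auto
  then have "j \<notin> cDes n \<pi>" unfolding cDes_def j'_def by simp
  then show ?thesis using j(1) by blast
qed

lemma cshift_one_eq: "cshift n 1 J = (\<lambda>j. j mod n + 1) ` J"
  unfolding cshift_def by (intro image_cong) auto

lemma inj_on_cshift_one: "inj_on (cshift n 1) (Pow {1..n})"
proof -
  have "inj_on (\<lambda>j. j mod n + 1) {1..n}"
    by (rule inj_onI) (auto simp: mod_if split: if_splits)
  then show ?thesis unfolding cshift_one_eq[abs_def] by (rule inj_on_image_Pow)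
qed

lemma cshift_one_insert_atLeastAtMost:
  assumes "i < n"
  shows "cshift n 1 (insert n {1..i}) = {1..Suc i}"
proof -
  have "(\<lambda>j. j mod n + 1) ` {1..i} = Suc ` {1..i}" using assms by (intro image_cong) auto
  then show ?thesis unfolding cshift_one_eq using assms by auto
qed

lemma card_cDes_eq_cshift:
  assumes "cDes_invariant n A" "S \<subseteq> {1..n}"
  shows "card {\<pi> \<in> A. cDes n \<pi> = cshift n 1 S} = card {\<pi> \<in> A. cDes n \<pi> = S}"
proof -
  obtain \<psi> where bij: "bij_betw \<psi> A A"
    and shift: "\<forall>\<pi>\<in>A. cDes n (\<psi> \<pi>) = cshift n 1 (cDes n \<pi>)"
    using assms(1) unfolding cDes_invariant_def by blast
  have "cshift n 1 (cDes n \<pi>) = cshift n 1 S \<longleftrightarrow> cDes n \<pi> = S" for \<pi>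
    using inj_onD[OF inj_on_cshift_one] cDes_subset assms(2) by blast
  then have "bij_betw \<psi> {\<pi> \<in> A. cDes n \<pi> = S} {\<sigma> \<in> A. cDes n \<sigma> = cshift n 1 S}"
    using shift by (intro bij_betw_Collect[OF bij]) auto
  then show ?thesis by (simp add: bij_betw_same_card)
qed

lemma sum_alternating_adjacent:
  fixes F :: "nat \<Rightarrow> 'a :: comm_ring_1"
  assumes "k \<le> n"
  shows "(\<Sum>i=k..<n. (-1) ^ (i - k) * (F i + F (Suc i))) = F k - (-1) ^ (n - k) * F n"
proof -
  define G where "G i = (-1) ^ (i - k) * F i" for i
  have "(\<Sum>i=k..<n. (-1) ^ (i - k) * (F i + F (Suc i))) = - (\<Sum>i=k..<n. G (Suc i) - G i)"
    by (auto simp: G_def Suc_diff_le algebra_simps sum_negf[symmetric] intro!: sum.cong)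
  also have "\<dots> = G k - G n" using sum_Suc_diff'[OF assms, of G] by simp
  finally show ?thesis by (simp add: G_def)
qed

lemma hook_multiplicity_eq_cDes_counts:
  assumes "finite A" "cDes_invariant n A" "i < n"
    and "card {\<pi> \<in> A. Des n \<pi> = {1..i}}
       = (\<Sum>la\<in>partitions n. m la * card {T \<in> SYT la. DesT la T = {1..i}})"
  shows "m (hook n i)
       = card {\<pi> \<in> A. cDes n \<pi> = {1..i}} + card {\<pi> \<in> A. cDes n \<pi> = {1..Suc i}}"
proof -
  have "m (hook n i) = card {\<pi> \<in> A. Des n \<pi> = {1..i}}"
    using assms(4) sum_card_SYT_initial_descents[OF assms(3)] by simp
  also have "\<dots> = card {\<pi> \<in> A. cDes n \<pi> = {1..i}}
                  + card {\<pi> \<in> A. cDes n \<pi> = insert n {1..i}}"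
    using assms(3) by (intro card_Des_eq[OF assms(1)]) auto
  also have "card {\<pi> \<in> A. cDes n \<pi> = insert n {1..i}} = card {\<pi> \<in> A. cDes n \<pi> = {1..Suc i}}"
    using card_cDes_eq_cshift[OF assms(2), of "insert n {1..i}"]
      cshift_one_insert_atLeastAtMost[OF assms(3)] assms(3) by simp
  finally show ?thesis .
qed

theorem lemma3p8:
  fixes n :: nat and A :: "(nat \<Rightarrow> nat) set" and m :: "nat list \<Rightarrow> nat"
  assumes "n \<ge> 2"
    and "\<forall>\<pi>\<in>A. \<pi> permutes {1..n}"
    and "schur_positive n A"
    and "cDes_invariant n A"
    and "\<forall>J. card {\<pi>\<in>A. Des n \<pi> = J}
               = (\<Sum>la\<in>partitions n. m la * card {T\<in>SYT la. DesT la T = J})"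
  shows "(\<forall>k<n. 0 \<le> (\<Sum>i=k..n-1. (-1::int) ^ (i - k) * int (m (hook n i)))) \<and>
         (\<Sum>i=0..n-1. (-1::int) ^ i * int (m (hook n i))) = 0"
proof -
  have fin: "finite A"
    using assms(2) by (intro finite_subset[OF _ finite_permutations[of "{1..n}"]]) auto
  define f where "f j = int (card {\<pi> \<in> A. cDes n \<pi> = {1..j}})" for j
  have hook: "int (m (hook n i)) = f i + f (Suc i)" if "i < n" for i
    using hook_multiplicity_eq_cDes_counts[OF fin assms(4) that spec[OF assms(5)]] by (simp add: f_def)
  have "{\<pi> \<in> A. cDes n \<pi> = {1..0}} = {}"
    using cDes_nonempty[OF permutes_inj_on assms(1)] assms(2) by auto
  then have "f 0 = 0" unfolding f_def by (simp only: card.empty of_nat_0)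
  have "f n = 0" using cDes_neq_atLeastAtMost assms(1) by (simp add: f_def)
  have alternating: "(\<Sum>i=k..n-1. (-1::int) ^ (i - k) * int (m (hook n i))) = f k" if "k < n" for k
  proof -
    have "{k..n-1} = {k..<n}" using that by auto
    then have "(\<Sum>i=k..n-1. (-1::int) ^ (i - k) * int (m (hook n i)))
        = (\<Sum>i=k..<n. (-1) ^ (i - k) * (f i + f (Suc i)))"
      using hook by simp
    then show ?thesis using sum_alternating_adjacent[of k n f] that \<open>f n = 0\<close> by simp
  qed
  moreover have "0 \<le> f k" for k by (simp add: f_def)
  ultimately show ?thesis using alternating[of 0] \<open>f 0 = 0\<close> assms(1) by simp
qed

end
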